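(* Let $m\in\{1,2\}$, $K>0$, $\gamma=3$, $\Omega=[a,b]\subset(0,\infty)$, $T>0$, and let $(\rho,u)$ be a smooth solution ($\rho>0$) of the radially symmetric isentropic Euler equations $$(r^m\rho)_t+(r^m\rho u)_r=0,\qquad (r^m\rho u)_t+(r^m\rho u^2)_r+r^m p_r=0,\qquad p=K\rho^\gamma,$$ on the domain of influence $D(\Omega,T)$, in the supersonic inward regime $c_1<c_2<0$. If $\alpha(r,0)>0$ and $\beta(r,0)<0$ for all $r\in\Omega$, then $\alpha(r,t)>0$ and $\beta(r,t)<0$ for all $(r,t)\in D(\Omega,T)$. Similarly, if $\alpha(r,0)<0$ and $\beta(r,0)>0$ for all $r\in\Omega$, then $\alpha(r,t)<0$ and $\beta(r,t)>0$ for all $(r,t)\in D(\Omega,T)$.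
   Context: Here $h=\sqrt{K\gamma}\,\rho^{(\gamma-1)/2}$, $c_1=u-h$, $c_2=u+h$, $$\alpha=u_r+\tfrac{2}{\gamma-1}h_r+\tfrac{m}{r}\tfrac{hu}{c_2},\qquad \beta=u_r-\tfrac{2}{\gamma-1}h_r-\tfrac{m}{r}\tfrac{hu}{c_1}.$$ Characteristic flow maps: $\partial_t\xi(r_0,t)=c_1(\xi(r_0,t),t)$, $\partial_t\psi(r_0,t)=c_2(\psi(r_0,t),t)$, $\xi(r_0,0)=\psi(r_0,0)=r_0$. The domain of influence $D(\Omega,T)$ is the set of $(r,t)\in\mathbb{R}\times[0,T]$ for which there exist $r_1,r_2\in\Omega$ with $\psi(r_1,t)=\xi(r_2,t)=r$. *)

theory Defs
  imports "HOL-Analysis.Analysis"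
begin

definition pd_r :: "(real \<times> real \<Rightarrow> real) \<Rightarrow> real \<times> real \<Rightarrow> real" where
  "pd_r f x = frechet_derivative f (at x) (1, 0)"

definition pd_t :: "(real \<times> real \<Rightarrow> real) \<Rightarrow> real \<times> real \<Rightarrow> real" where
  "pd_t f x = frechet_derivative f (at x) (0, 1)"

fun Ck_on :: "nat \<Rightarrow> (real \<times> real) set \<Rightarrow> (real \<times> real \<Rightarrow> real) \<Rightarrow> bool" where
  "Ck_on 0 U f = continuous_on U f"
| "Ck_on (Suc k) U f = ((\<forall>x\<in>U. f differentiable (at x)) \<and>
      Ck_on k U (pd_r f) \<and> Ck_on k U (pd_t f))"

definition smooth_on2 :: "(real \<times> real) set \<Rightarrow> (real \<times> real \<Rightarrow> real) \<Rightarrow> bool" where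
  "smooth_on2 U f = (\<forall>k. Ck_on k U f)"

definition hh :: "real \<Rightarrow> real \<Rightarrow> (real \<times> real \<Rightarrow> real) \<Rightarrow> real \<times> real \<Rightarrow> real" where
  "hh K \<gamma> \<rho> x = sqrt (K * \<gamma>) * (\<rho> x) powr ((\<gamma> - 1) / 2)"

definition c1 :: "real \<Rightarrow> real \<Rightarrow> (real \<times> real \<Rightarrow> real) \<Rightarrow> (real \<times> real \<Rightarrow> real) \<Rightarrow> real \<times> real \<Rightarrow> real" where
  "c1 K \<gamma> \<rho> u x = u x - hh K \<gamma> \<rho> x"

definition c2 :: "real \<Rightarrow> real \<Rightarrow> (real \<times> real \<Rightarrow> real) \<Rightarrow> (real \<times> real \<Rightarrow> real) \<Rightarrow> real \<times> real \<Rightarrow> real" where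
  "c2 K \<gamma> \<rho> u x = u x + hh K \<gamma> \<rho> x"

definition alpha :: "nat \<Rightarrow> real \<Rightarrow> real \<Rightarrow> (real \<times> real \<Rightarrow> real) \<Rightarrow> (real \<times> real \<Rightarrow> real) \<Rightarrow> real \<times> real \<Rightarrow> real" where
  "alpha m K \<gamma> \<rho> u x = pd_r u x + 2 / (\<gamma> - 1) * pd_r (hh K \<gamma> \<rho>) x
     + real m / fst x * (hh K \<gamma> \<rho> x * u x / c2 K \<gamma> \<rho> u x)"

definition beta :: "nat \<Rightarrow> real \<Rightarrow> real \<Rightarrow> (real \<times> real \<Rightarrow> real) \<Rightarrow> (real \<times> real \<Rightarrow> real) \<Rightarrow> real \<times> real \<Rightarrow> real" where
  "beta m K \<gamma> \<rho> u x = pd_r u x - 2 / (\<gamma> - 1) * pd_r (hh K \<gamma> \<rho>) x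
     - real m / fst x * (hh K \<gamma> \<rho> x * u x / c1 K \<gamma> \<rho> u x)"

definition dom_infl :: "(real \<Rightarrow> real \<Rightarrow> real) \<Rightarrow> (real \<Rightarrow> real \<Rightarrow> real) \<Rightarrow> real set \<Rightarrow> real \<Rightarrow> (real \<times> real) set" where
  "dom_infl \<xi> \<psi> \<Omega> T = {(r, t). t \<in> {0..T} \<and> (\<exists>r1\<in>\<Omega>. \<exists>r2\<in>\<Omega>. \<psi> r1 t = r \<and> \<xi> r2 t = r)}"

end

(*
  For gamma = 3 the sound speed is h = k rho with k = sqrt (3 K), so alpha and beta are one
  expression, slope kappa, evaluated at kappa = k and kappa = -k. Differentiating the reduced
  Euler equations shows that slope kappa obeys a Riccati equation along the characteristics of
  speed u + kappa rho, whose source term is a nonnegative multiple of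
  slope (- kappa) / (u + kappa rho). In the supersonic regime both speeds u + k rho and
  u - k rho are negative, so alpha stays positive as long as beta is negative, and vice versa.
  Hence there is no first time at which the signs fail in the domain of influence D: D is
  compact, and the two characteristics through a point of D stay in D backwards in time. Both
  facts rest on the continuity of the characteristic flows in their initial point, which follows
  from a Gronwall estimate.
*)

theory Submission
  imports Defs
begin

section \<open>Partial derivatives in the plane\<close>

abbreviation has_partials ::
    "(real \<times> real \<Rightarrow> real) \<Rightarrow> real \<times> real \<Rightarrow> real \<Rightarrow> real \<Rightarrow> bool" where
  "has_partials f x fr ft \<equiv> (f has_derivative (\<lambda>v. fst v * fr + snd v * ft)) (at x)"

lemma has_partials_pd:
  assumes "has_partials f x fr ft"
  shows "pd_r f x = fr" "pd_t f x = ft"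
  by (simp_all add: pd_r_def pd_t_def frechet_derivative_at[OF assms, symmetric])

lemma differentiable_has_partials:
  assumes "f differentiable (at x)"
  shows "has_partials f x (pd_r f x) (pd_t f x)"
proof -
  let ?D = "frechet_derivative f (at x)"
  have D: "(f has_derivative ?D) (at x)"
    using assms frechet_derivative_works by blast
  have "?D = (\<lambda>v. fst v * pd_r f x + snd v * pd_t f x)"
  proof
    fix v
    have "?D v = ?D (fst v *\<^sub>R (1, 0) + snd v *\<^sub>R (0, 1))" by (cases v) simp
    also have "\<dots> = fst v *\<^sub>R ?D (1, 0) + snd v *\<^sub>R ?D (0, 1)"
      using has_derivative_linear[OF D] by (simp only: linear_add linear_scale)
    finally show "?D v = fst v * pd_r f x + snd v * pd_t f x"
      by (simp add: pd_r_def pd_t_def)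
  qed
  with D show ?thesis by simp
qed

lemma has_partials_transform_open:
  assumes "has_partials f x fr ft" "open U" "x \<in> U" "\<And>y. y \<in> U \<Longrightarrow> f y = g y"
  shows "has_partials g x fr ft"
  using has_derivative_transform_within_open[OF assms] .

lemma has_partials_cong:
  "has_partials f x fr ft \<Longrightarrow> fr = fr' \<Longrightarrow> ft = ft' \<Longrightarrow> has_partials f x fr' ft'"
  by simp

lemma has_partials_const: "has_partials (\<lambda>y. c) x 0 0"
  by (rule has_derivative_eq_rhs[OF has_derivative_const]) auto

lemma has_partials_fst: "has_partials fst x 1 0"
  by (rule has_derivative_eq_rhs[OF has_derivative_fst[OF has_derivative_ident]]) auto

lemma has_partials_add:
  "has_partials f x a b \<Longrightarrow> has_partials g x c d \<Longrightarrow>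
    has_partials (\<lambda>y. f y + g y) x (a + c) (b + d)"
  by (drule (1) has_derivative_add, erule has_derivative_eq_rhs) (auto simp: algebra_simps)

lemma has_partials_diff:
  "has_partials f x a b \<Longrightarrow> has_partials g x c d \<Longrightarrow>
    has_partials (\<lambda>y. f y - g y) x (a - c) (b - d)"
  by (drule (1) has_derivative_diff, erule has_derivative_eq_rhs) (auto simp: algebra_simps)

lemma has_partials_mult:
  "has_partials f x a b \<Longrightarrow> has_partials g x c d \<Longrightarrow>
    has_partials (\<lambda>y. f y * g y) x (f x * c + a * g x) (f x * d + b * g x)"
  by (drule (1) has_derivative_mult, erule has_derivative_eq_rhs) (auto simp: algebra_simps)

lemma has_partials_cmult:
  "has_partials f x a b \<Longrightarrow> has_partials (\<lambda>y. c * f y) x (c * a) (c * b)"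
  using has_partials_mult[OF has_partials_const] by (simp only: mult_zero_left add_0_right)

lemma has_partials_divide:
  assumes "has_partials f x a b" "has_partials g x c d" "g x \<noteq> 0"
  shows "has_partials (\<lambda>y. f y / g y) x
           ((a * g x - f x * c) / (g x)\<^sup>2) ((b * g x - f x * d) / (g x)\<^sup>2)"
  using has_derivative_divide[OF assms] by (rule has_derivative_eq_rhs)
    (use assms(3) in \<open>auto simp: fun_eq_iff field_simps power2_eq_square\<close>)

lemma has_partials_power:
  "has_partials f x a b \<Longrightarrow>
    has_partials (\<lambda>y. f y ^ n) x (real n * f x ^ (n - 1) * a) (real n * f x ^ (n - 1) * b)"
  by (drule has_derivative_power, erule has_derivative_eq_rhs) (auto simp: algebra_simps)

lemma has_partials_zero_on_open:
  assumes "has_partials f x a b" "open U" "x \<in> U" "\<And>y. y \<in> U \<Longrightarrow> f y = 0"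
  shows "a = 0" "b = 0"
proof -
  have "has_partials (\<lambda>y. 0) x a b"
    by (rule has_partials_transform_open[OF assms(1-3)]) (use assms(4) in simp)
  from has_partials_pd[OF this] has_partials_pd[OF has_partials_const[of 0 x]]
  show "a = 0" "b = 0" by auto
qed

lemma has_partials_along_graph:
  assumes "(g has_real_derivative v) (at s within S)" "has_partials F (g s, s) Fr Ft"
  shows "((\<lambda>s. F (g s, s)) has_real_derivative Fr * v + Ft) (at s within S)"
proof -
  have "((\<lambda>s. (g s, s)) has_derivative (\<lambda>h. (h * v, h))) (at s within S)"
    using assms(1) unfolding has_field_derivative_def
    by (intro has_derivative_Pair has_derivative_ident) (simp add: mult_commute_abs)
  from has_derivative_in_compose[OF this has_derivative_at_withinI[OF assms(2)]]
  show ?thesis unfolding has_field_derivative_def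
    by (rule has_derivative_eq_rhs) (auto simp: algebra_simps)
qed

lemma has_partials_horizontal:
  assumes "has_partials F (s, y) Fr Ft"
  shows "((\<lambda>s. F (s, y)) has_real_derivative Fr) (at s)"
proof -
  have "((\<lambda>s. (s, y)) has_derivative (\<lambda>h. (h, 0))) (at s)"
    by (intro has_derivative_Pair has_derivative_ident has_derivative_const)
  from has_derivative_compose[OF this assms] show ?thesis
    unfolding has_field_derivative_def by (simp add: mult_commute_abs)
qed

lemma has_partials_vertical:
  assumes "has_partials F (y, s) Fr Ft"
  shows "((\<lambda>s. F (y, s)) has_real_derivative Ft) (at s)"
proof -
  have "((\<lambda>s. (y, s)) has_derivative (\<lambda>h. (0, h))) (at s)"
    by (intro has_derivative_Pair has_derivative_ident has_derivative_const)
  from has_derivative_compose[OF this assms] show ?thesis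
    unfolding has_field_derivative_def by (simp add: mult_commute_abs)
qed

lemma Ck_on_2_iff:
  "Ck_on 2 U f \<longleftrightarrow> (\<forall>x\<in>U. f differentiable (at x)) \<and>
     (\<forall>x\<in>U. pd_r f differentiable (at x)) \<and> (\<forall>x\<in>U. pd_t f differentiable (at x)) \<and>
     continuous_on U (pd_r (pd_r f)) \<and> continuous_on U (pd_t (pd_r f)) \<and>
     continuous_on U (pd_r (pd_t f)) \<and> continuous_on U (pd_t (pd_t f))"
  by (auto simp: numeral_2_eq_2)

lemma Ck_on_2_has_partials:
  assumes "Ck_on 2 U f" "x \<in> U"
  shows "has_partials f x (pd_r f x) (pd_t f x)"
    and "has_partials (pd_r f) x (pd_r (pd_r f) x) (pd_t (pd_r f) x)"
    and "has_partials (pd_t f) x (pd_r (pd_t f) x) (pd_t (pd_t f) x)"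
  using assms by (auto simp: Ck_on_2_iff intro!: differentiable_has_partials)

lemma Ck_on_2_continuous_on:
  assumes "Ck_on 2 U f"
  shows "continuous_on U f" "continuous_on U (pd_r f)"
  using assms by (auto simp: Ck_on_2_iff
      intro!: continuous_at_imp_continuous_on differentiable_imp_continuous_within)

lemma rectangle_difference_mvt:
  assumes h: "h > 0"
    and box: "\<And>p q. p \<in> {x0..x0 + h} \<Longrightarrow> q \<in> {y0..y0 + h} \<Longrightarrow> (p, q) \<in> U"
    and C2: "Ck_on 2 U f"
  defines "\<Delta> \<equiv> f (x0 + h, y0 + h) - f (x0 + h, y0) - f (x0, y0 + h) + f (x0, y0)"
  shows "\<exists>s\<in>{x0<..<x0 + h}. \<exists>t\<in>{y0<..<y0 + h}. \<Delta> = h * h * pd_t (pd_r f) (s, t)"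
    and "\<exists>s\<in>{x0<..<x0 + h}. \<exists>t\<in>{y0<..<y0 + h}. \<Delta> = h * h * pd_r (pd_t f) (s, t)"
proof -
  have partials: "has_partials g (p, q) (pd_r g (p, q)) (pd_t g (p, q))"
    if "g \<in> {f, pd_r f, pd_t f}" "p \<in> {x0..x0 + h}" "q \<in> {y0..y0 + h}" for g p q
    using Ck_on_2_has_partials[OF C2 box[OF that(2,3)]] that(1) by auto
  note horizontal = has_partials_horizontal[OF partials]
    and vertical = has_partials_vertical[OF partials]
  have d1: "DERIV (\<lambda>p. f (p, y0 + h) - f (p, y0)) p :> pd_r f (p, y0 + h) - pd_r f (p, y0)"
    if "x0 \<le> p" "p \<le> x0 + h" for p
    using that h by (intro DERIV_diff horizontal) auto
  obtain s where s: "x0 < s" "s < x0 + h" "\<Delta> = h * (pd_r f (s, y0 + h) - pd_r f (s, y0))"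
    using MVT2[of x0 "x0 + h", OF _ d1] h by (auto simp: \<Delta>_def)
  have d2: "DERIV (\<lambda>q. pd_r f (s, q)) q :> pd_t (pd_r f) (s, q)" if "y0 \<le> q" "q \<le> y0 + h" for q
    using that s by (intro vertical) auto
  obtain t where "y0 < t" "t < y0 + h"
    "pd_r f (s, y0 + h) - pd_r f (s, y0) = h * pd_t (pd_r f) (s, t)"
    using MVT2[of y0 "y0 + h", OF _ d2] h by auto
  with s show "\<exists>s\<in>{x0<..<x0 + h}. \<exists>t\<in>{y0<..<y0 + h}. \<Delta> = h * h * pd_t (pd_r f) (s, t)"
    by (force simp: mult.assoc)
  have d3: "DERIV (\<lambda>q. f (x0 + h, q) - f (x0, q)) q :> pd_t f (x0 + h, q) - pd_t f (x0, q)"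
    if "y0 \<le> q" "q \<le> y0 + h" for q
    using that h by (intro DERIV_diff vertical) auto
  obtain t where t: "y0 < t" "t < y0 + h" "\<Delta> = h * (pd_t f (x0 + h, t) - pd_t f (x0, t))"
    using MVT2[of y0 "y0 + h", OF _ d3] h by (auto simp: \<Delta>_def algebra_simps)
  have d4: "DERIV (\<lambda>p. pd_t f (p, t)) p :> pd_r (pd_t f) (p, t)" if "x0 \<le> p" "p \<le> x0 + h" for p
    using that t by (intro horizontal) auto
  obtain s where "x0 < s" "s < x0 + h"
    "pd_t f (x0 + h, t) - pd_t f (x0, t) = h * pd_r (pd_t f) (s, t)"
    using MVT2[of x0 "x0 + h", OF _ d4] h by auto
  with t show "\<exists>s\<in>{x0<..<x0 + h}. \<exists>t\<in>{y0<..<y0 + h}. \<Delta> = h * h * pd_r (pd_t f) (s, t)"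
    by (force simp: mult.assoc)
qed

lemma pd_t_pd_r_commute:
  assumes C2: "Ck_on 2 U f" and U: "open U" and x: "x \<in> U"
  shows "pd_t (pd_r f) x = pd_r (pd_t f) x"
proof -
  let ?F = "pd_t (pd_r f)" and ?G = "pd_r (pd_t f)"
  obtain x0 y0 where x0: "x = (x0, y0)" by (cases x)
  have close: "\<bar>?F x - ?G x\<bar> < 2 * e" if e: "e > 0" for e
  proof -
    have "continuous (at x) ?F" "continuous (at x) ?G"
      using C2 U x by (auto simp: Ck_on_2_iff continuous_on_eq_continuous_at)
    then obtain dF dG where
      dF: "dF > 0" "\<And>p. dist p x < dF \<Longrightarrow> dist (?F p) (?F x) < e" and
      dG: "dG > 0" "\<And>p. dist p x < dG \<Longrightarrow> dist (?G p) (?G x) < e"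
      using e unfolding continuous_at_eps_delta by metis
    obtain dU where dU: "dU > 0" "ball x dU \<subseteq> U"
      using U x open_contains_ball by blast
    define h where "h = min dU (min dF dG) / 3"
    have h: "h > 0" using dU dF dG by (simp add: h_def)
    have near: "dist (p, q) x < min dU (min dF dG)"
      if "p \<in> {x0..x0 + h}" "q \<in> {y0..y0 + h}" for p q
    proof -
      have "dist (p, q) x \<le> \<bar>p - x0\<bar> + \<bar>q - y0\<bar>"
        using sqrt_sum_squares_le_sum_abs[of "p - x0" "q - y0"]
        by (simp add: x0 dist_Pair_Pair dist_real_def)
      also have "\<dots> < min dU (min dF dG)" using that h by (auto simp: h_def)
      finally show ?thesis .
    qed
    have box: "(p, q) \<in> U" if "p \<in> {x0..x0 + h}" "q \<in> {y0..y0 + h}" for p q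
      using near[OF that] dU(2) by (auto simp: dist_commute)
    obtain s1 t1 s2 t2 where
      st: "s1 \<in> {x0<..<x0 + h}" "t1 \<in> {y0<..<y0 + h}" "s2 \<in> {x0<..<x0 + h}" "t2 \<in> {y0<..<y0 + h}"
      and "h * h * ?F (s1, t1) = h * h * ?G (s2, t2)"
      using rectangle_difference_mvt[OF h box C2] by metis
    then have FG: "?F (s1, t1) = ?G (s2, t2)" using h by simp
    have "dist (?F (s1, t1)) (?F x) < e" "dist (?G (s2, t2)) (?G x) < e"
      using dF(2) dG(2) near st by auto
    with FG show ?thesis by (simp add: dist_real_def)
  qed
  show ?thesis
    using close[of "\<bar>?F x - ?G x\<bar> / 2"] by fastforce
qed

section \<open>Comparison lemmas for real functions\<close>

lemma first_nonpos_point: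
  fixes f :: "real \<Rightarrow> real"
  assumes "continuous_on {c..t} f" "c \<le> t" "f t \<le> 0"
  obtains s0 where "s0 \<in> {c..t}" "f s0 \<le> 0" "\<And>s. c \<le> s \<Longrightarrow> s < s0 \<Longrightarrow> f s > 0"
proof -
  define S where "S = {s \<in> {c..t}. f s \<le> 0}"
  have "closed S" unfolding S_def
    by (rule continuous_on_closed_Collect_le[OF assms(1) continuous_on_const]) simp
  moreover have "S \<noteq> {}" "bdd_below S" using assms by (auto simp: S_def bdd_below_def)
  ultimately have inS: "Inf S \<in> S" using closed_contains_Inf by blast
  show ?thesis
  proof (rule that[of "Inf S"])
    show "Inf S \<in> {c..t}" "f (Inf S) \<le> 0" using inS by (auto simp: S_def)
    show "f s > 0" if "c \<le> s" "s < Inf S" for s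
    proof (rule ccontr)
      assume "\<not> f s > 0"
      with that inS have "s \<in> S" by (auto simp: S_def)
      then have "Inf S \<le> s" using \<open>bdd_below S\<close> by (rule cInf_lower)
      with that show False by simp
    qed
  qed
qed

lemma pos_if_deriv_pos_at_zeros:
  fixes d D :: "real \<Rightarrow> real"
  assumes der: "\<And>s. s \<in> {p..q} \<Longrightarrow> (d has_real_derivative D s) (at s within {p..q})"
    and zeros: "\<And>s. s \<in> {p..q} \<Longrightarrow> d s = 0 \<Longrightarrow> D s > 0"
    and s: "p \<le> s1" "s1 < s2" "s2 \<le> q" "d s1 \<ge> 0"
  shows "d s2 > 0"
proof (rule ccontr)
  assume "\<not> d s2 > 0"
  then have "d s2 \<le> 0" by simp
  have cont: "continuous_on {p..q} d" using der by (rule DERIV_continuous_on)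
  have s1pq: "s1 \<in> {p..q}" using s by simp
  obtain s3 where s3: "s1 \<le> s3" "s3 < s2" "d s3 > 0"
  proof (cases "d s1 > 0")
    case True
    then show ?thesis using that s by auto
  next
    case False
    with s have "d s1 = 0" by simp
    obtain e where e: "e > 0" "\<forall>h>0. s1 + h \<in> {p..q} \<longrightarrow> h < e \<longrightarrow> d s1 < d (s1 + h)"
      using has_real_derivative_pos_inc_right[OF der[OF s1pq] zeros[OF s1pq \<open>d s1 = 0\<close>]] by blast
    define h where "h = min e (s2 - s1) / 2"
    have "h > 0" "h < e" "h < s2 - s1" using e(1) s by (auto simp: h_def)
    then have "d (s1 + h) > 0" using e(2) s \<open>d s1 = 0\<close> by auto
    with \<open>h > 0\<close> \<open>h < s2 - s1\<close> show ?thesis by (intro that[of "s1 + h"]) auto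
  qed
  have cont': "continuous_on {s3..s2} d"
    using cont by (rule continuous_on_subset) (use s s3 in auto)
  obtain \<sigma> where \<sigma>: "\<sigma> \<in> {s3..s2}" "d \<sigma> \<le> 0" and pos: "\<And>s. s3 \<le> s \<Longrightarrow> s < \<sigma> \<Longrightarrow> d s > 0"
    using first_nonpos_point[OF cont' less_imp_le[OF s3(2)] \<open>d s2 \<le> 0\<close>] by blast
  have "s3 < \<sigma>" using \<sigma> s3 by (cases "\<sigma> = s3") auto
  obtain z where z: "s3 \<le> z" "z \<le> \<sigma>" "d z = 0"
    using IVT2'[of d \<sigma> 0 s3] \<sigma> s3 continuous_on_subset[OF cont'] by fastforce
  have "z = \<sigma>" using pos[of z] z by fastforce
  with z have "d \<sigma> = 0" by simp
  have \<sigma>pq: "\<sigma> \<in> {p..q}" using \<sigma> s s3 by auto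
  obtain e where e: "e > 0" "\<forall>h>0. \<sigma> - h \<in> {p..q} \<longrightarrow> h < e \<longrightarrow> d (\<sigma> - h) < d \<sigma>"
    using has_real_derivative_pos_inc_left[OF der[OF \<sigma>pq] zeros[OF \<sigma>pq \<open>d \<sigma> = 0\<close>]] by blast
  define h where "h = min e (\<sigma> - s3) / 2"
  have "h > 0" "h < e" "h \<le> \<sigma> - s3" using e(1) \<open>s3 < \<sigma>\<close> by (auto simp: h_def)
  then have "d (\<sigma> - h) < 0" "d (\<sigma> - h) > 0"
    using e(2) pos[of "\<sigma> - h"] \<open>d \<sigma> = 0\<close> \<sigma>pq s s3 by auto
  then show False by simp
qed

lemma pos_if_deriv_ge_linear:
  fixes f f' p :: "real \<Rightarrow> real"
  assumes t: "0 \<le> t"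
    and der: "\<And>s. s \<in> {0..t} \<Longrightarrow> (f has_real_derivative f' s) (at s within {0..t})"
    and p: "continuous_on {0..t} p"
    and lower: "\<And>s. 0 \<le> s \<Longrightarrow> s < t \<Longrightarrow> f s > 0 \<Longrightarrow> f' s \<ge> p s * f s"
    and f0: "f 0 > 0"
  shows "f t > 0"
proof (rule ccontr)
  assume "\<not> f t > 0"
  have cont: "continuous_on {0..t} f" using der by (rule DERIV_continuous_on)
  have "bounded (p ` {0..t})"
    using compact_imp_bounded[OF compact_continuous_image[OF p compact_Icc]] .
  then obtain M where M: "\<And>s. s \<in> {0..t} \<Longrightarrow> \<bar>p s\<bar> \<le> M"
    unfolding bounded_iff by (metis image_eqI real_norm_def)
  obtain s0 where s0: "s0 \<in> {0..t}" "f s0 \<le> 0" and pos: "\<And>s. 0 \<le> s \<Longrightarrow> s < s0 \<Longrightarrow> f s > 0"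
    using first_nonpos_point[OF cont t] \<open>\<not> f t > 0\<close> by (metis not_less)
  have "0 < s0" using s0 f0 by (cases "s0 = 0") auto
  define g where "g s = f s * exp (M * s)" for s
  have "g 0 \<le> g s0"
  proof (rule DERIV_nonneg_imp_increasing_open[of 0 s0 g])
    fix z assume z: "0 < z" "z < s0"
    then have "(f has_real_derivative f' z) (at z)"
      using der[of z] s0 at_within_Icc_at[of 0 z t] by auto
    then have "(g has_real_derivative (f' z + M * f z) * exp (M * z)) (at z)"
      unfolding g_def by (auto intro!: derivative_eq_intros simp: algebra_simps)
    moreover have "f' z + M * f z \<ge> 0"
    proof -
      have "f z > 0" "p z \<ge> - M" using pos[of z] M[of z] z s0 by auto
      then have "p z * f z \<ge> - M * f z" using mult_right_mono[of "- M" "p z" "f z"] by simp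
      then show ?thesis using lower[of z] \<open>f z > 0\<close> z s0 by simp
    qed
    ultimately show "\<exists>y. (g has_real_derivative y) (at z) \<and> y \<ge> 0" by auto
  next
    show "continuous_on {0..s0} g"
      unfolding g_def using s0 by (auto intro!: continuous_intros continuous_on_subset[OF cont])
  qed (use \<open>0 < s0\<close> in simp)
  moreover have "g 0 > 0" "g s0 \<le> 0" using f0 s0 by (auto simp: g_def mult_nonpos_nonneg)
  ultimately show False by simp
qed

section \<open>Continuous dependence of a flow on its initial point\<close>

lemma compact_tube_subset_open:
  fixes g :: "real \<Rightarrow> real"
  assumes U: "open U" and g: "continuous_on {0..T} g"
    and graph: "\<And>s. s \<in> {0..T} \<Longrightarrow> (g s, s) \<in> U"
  obtains \<delta> where "\<delta> > 0" "compact {(r, s). s \<in> {0..T} \<and> \<bar>r - g s\<bar> \<le> \<delta>}"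
    "{(r, s). s \<in> {0..T} \<and> \<bar>r - g s\<bar> \<le> \<delta>} \<subseteq> U"
proof -
  have "compact ((\<lambda>s. (g s, s)) ` {0..T})"
    by (intro compact_continuous_image continuous_on_Pair g continuous_on_id compact_Icc)
  then obtain \<delta> where \<delta>: "\<delta> > 0" "(\<Union>x\<in>(\<lambda>s. (g s, s)) ` {0..T}. cball x \<delta>) \<subseteq> U"
    using compact_subset_open_imp_cball_epsilon_subset[OF _ U] graph by blast
  define N where "N = {(r, s). s \<in> {0..T} \<and> \<bar>r - g s\<bar> \<le> \<delta>}"
  have "compact ((\<lambda>(s, v). (g s + v, s)) ` ({0..T} \<times> {-\<delta>..\<delta>}))"
    unfolding case_prod_unfold
    by (intro compact_continuous_image compact_Times compact_Icc continuous_intros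
        continuous_on_compose2[OF g]) auto
  moreover have "N = (\<lambda>(s, v). (g s + v, s)) ` ({0..T} \<times> {-\<delta>..\<delta>})"
  proof (intro set_eqI iffI)
    fix y assume "y \<in> N"
    then obtain r s where "y = (r, s)" "s \<in> {0..T}" "\<bar>r - g s\<bar> \<le> \<delta>" by (auto simp: N_def)
    then show "y \<in> (\<lambda>(s, v). (g s + v, s)) ` ({0..T} \<times> {-\<delta>..\<delta>})"
      by (intro image_eqI[of _ _ "(s, r - g s)"]) (auto simp: abs_le_iff)
  qed (auto simp: N_def)
  moreover have "N \<subseteq> U"
  proof
    fix y assume "y \<in> N"
    then obtain r s where y: "y = (r, s)" "s \<in> {0..T}" "\<bar>r - g s\<bar> \<le> \<delta>" by (auto simp: N_def)
    then have "y \<in> cball (g s, s) \<delta>" by (simp add: dist_Pair_Pair dist_real_def abs_minus_commute)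
    with y(2) \<delta>(2) show "y \<in> U" by blast
  qed
  ultimately show ?thesis using that \<delta>(1) by (simp add: N_def)
qed

lemma lipschitz_near_compact_graph:
  fixes c cr :: "real \<times> real \<Rightarrow> real" and g :: "real \<Rightarrow> real"
  assumes U: "open U"
    and cder: "\<And>r s. (r, s) \<in> U \<Longrightarrow> ((\<lambda>r. c (r, s)) has_real_derivative cr (r, s)) (at r)"
    and cr: "continuous_on U cr"
    and g: "continuous_on {0..T} g"
    and graph: "\<And>s. s \<in> {0..T} \<Longrightarrow> (g s, s) \<in> U"
  obtains \<delta> L where "\<delta> > 0" "L \<ge> 0"
    "\<And>s y1 y2. s \<in> {0..T} \<Longrightarrow> \<bar>y1 - g s\<bar> \<le> \<delta> \<Longrightarrow> \<bar>y2 - g s\<bar> \<le> \<delta> \<Longrightarrow>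
       \<bar>c (y2, s) - c (y1, s)\<bar> \<le> L * \<bar>y2 - y1\<bar>"
proof -
  obtain \<delta> where \<delta>: "\<delta> > 0" and N: "compact {(r, s). s \<in> {0..T} \<and> \<bar>r - g s\<bar> \<le> \<delta>}"
    and NU: "{(r, s). s \<in> {0..T} \<and> \<bar>r - g s\<bar> \<le> \<delta>} \<subseteq> U"
    using compact_tube_subset_open[OF U g graph] by blast
  have "bounded (cr ` {(r, s). s \<in> {0..T} \<and> \<bar>r - g s\<bar> \<le> \<delta>})"
    using compact_imp_bounded compact_continuous_image continuous_on_subset[OF cr NU] N by blast
  then obtain L where L: "\<And>r s. s \<in> {0..T} \<Longrightarrow> \<bar>r - g s\<bar> \<le> \<delta> \<Longrightarrow> \<bar>cr (r, s)\<bar> \<le> L"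
    unfolding bounded_iff by fastforce
  show ?thesis
  proof (rule that[OF \<delta>, of "max L 0"])
    fix s y1 y2 assume s: "s \<in> {0..T}" and y: "\<bar>y1 - g s\<bar> \<le> \<delta>" "\<bar>y2 - g s\<bar> \<le> \<delta>"
    let ?I = "{g s - \<delta>..g s + \<delta>}"
    have "norm (c (y2, s) - c (y1, s)) \<le> max L 0 * norm (y2 - y1)"
    proof (rule field_differentiable_bound[of ?I])
      fix r assume "r \<in> ?I"
      then have r: "\<bar>r - g s\<bar> \<le> \<delta>" by (simp add: abs_le_iff)
      show "((\<lambda>r. c (r, s)) has_field_derivative cr (r, s)) (at r within ?I)"
        using cder[of r s] r s NU by (auto intro: has_field_derivative_at_within)
      show "norm (cr (r, s)) \<le> max L 0" using L[OF s r] by simp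
    qed (use y in \<open>auto simp: abs_le_iff\<close>)
    then show "\<bar>c (y2, s) - c (y1, s)\<bar> \<le> max L 0 * \<bar>y2 - y1\<bar>" by simp
  qed simp
qed

lemma gronwall_square:
  fixes e e' :: "real \<Rightarrow> real"
  assumes L: "L \<ge> 0" and t: "0 \<le> t"
    and der: "\<And>s. s \<in> {0..t} \<Longrightarrow> (e has_real_derivative e' s) (at s within {0..t})"
    and bound: "\<And>s. 0 < s \<Longrightarrow> s < t \<Longrightarrow> \<bar>e' s\<bar> \<le> L * \<bar>e s\<bar>"
  shows "(e t)\<^sup>2 \<le> (e 0)\<^sup>2 * exp (2 * L * t)"
proof -
  define g where "g s = e s * e s * exp (- 2 * L * s)" for s
  have "g t \<le> g 0"
  proof (rule DERIV_nonpos_imp_decreasing_open[OF t])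
    fix z assume z: "0 < z" "z < t"
    then have "(e has_real_derivative e' z) (at z)"
      using der[of z] at_within_Icc_at[of 0 z t] by auto
    then have "(g has_real_derivative
        2 * exp (- 2 * L * z) * (e z * e' z - L * (e z * e z))) (at z)"
      unfolding g_def by (auto intro!: derivative_eq_intros simp: algebra_simps)
    moreover have "e z * e' z \<le> L * (e z * e z)"
    proof -
      have "\<bar>e z\<bar> * \<bar>e' z\<bar> \<le> \<bar>e z\<bar> * (L * \<bar>e z\<bar>)"
        using bound[OF z] by (simp add: mult_left_mono)
      then show ?thesis by (simp add: abs_mult [symmetric] abs_le_iff mult_ac)
    qed
    ultimately show "\<exists>y. (g has_real_derivative y) (at z) \<and> y \<le> 0"
      by (auto intro!: mult_nonneg_nonpos)
  next
    have "continuous_on {0..t} e" using der by (rule DERIV_continuous_on)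
    then show "continuous_on {0..t} g"
      unfolding g_def by (intro continuous_intros)
  qed
  then have "g t * exp (2 * L * t) \<le> g 0 * exp (2 * L * t)" by simp
  then show ?thesis
    by (simp add: g_def power2_eq_square mult.assoc exp_add[symmetric])
qed

lemma gronwall_stays_small:
  fixes e e' :: "real \<Rightarrow> real"
  assumes L: "L \<ge> 0"
    and der: "\<And>s. s \<in> {0..T} \<Longrightarrow> (e has_real_derivative e' s) (at s within {0..T})"
    and bound: "\<And>s. s \<in> {0..T} \<Longrightarrow> \<bar>e s\<bar> \<le> \<delta> \<Longrightarrow> \<bar>e' s\<bar> \<le> L * \<bar>e s\<bar>"
    and small: "\<bar>e 0\<bar> * exp (L * T) < \<delta>"
    and t: "t \<in> {0..T}"
  shows "\<bar>e t\<bar> < \<delta>"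
proof (rule ccontr)
  assume "\<not> \<bar>e t\<bar> < \<delta>"
  then have "\<delta> - \<bar>e t\<bar> \<le> 0" by simp
  have cont: "continuous_on {0..T} e" using der by (rule DERIV_continuous_on)
  have e0: "\<bar>e 0\<bar> < \<delta>"
    using small t L mult_left_mono[of 1 "exp (L * T)" "\<bar>e 0\<bar>"] by auto
  have cont': "continuous_on {0..t} (\<lambda>s. \<delta> - \<bar>e s\<bar>)"
    using t by (intro continuous_intros continuous_on_subset[OF cont]) auto
  obtain s0 where s0: "s0 \<in> {0..t}" "\<delta> - \<bar>e s0\<bar> \<le> 0"
    and inside: "\<And>s. 0 \<le> s \<Longrightarrow> s < s0 \<Longrightarrow> \<delta> - \<bar>e s\<bar> > 0"
    using first_nonpos_point[OF cont' _ \<open>\<delta> - \<bar>e t\<bar> \<le> 0\<close>] t by auto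
  have sub: "{0..s0} \<subseteq> {0..T}" using s0 t by auto
  have "(e s0)\<^sup>2 \<le> (e 0)\<^sup>2 * exp (2 * L * s0)"
  proof (rule gronwall_square[OF L, where e' = e'])
    show "(e has_real_derivative e' s) (at s within {0..s0})" if "s \<in> {0..s0}" for s
      using DERIV_subset[OF der sub] that sub by blast
    show "\<bar>e' s\<bar> \<le> L * \<bar>e s\<bar>" if "0 < s" "s < s0" for s
      using bound[of s] inside[of s] that sub by auto
  qed (use s0 in auto)
  also have "\<dots> \<le> (e 0)\<^sup>2 * exp (2 * (L * T))"
    using s0 t L by (intro mult_left_mono) (auto simp: mult_left_mono)
  also have "\<dots> = (\<bar>e 0\<bar> * exp (L * T))\<^sup>2"
    by (simp only: exp_double power_mult_distrib power2_abs)
  also have "\<dots> < \<delta>\<^sup>2"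
    using small by (intro power_strict_mono) auto
  finally have "\<bar>e s0\<bar>\<^sup>2 < \<delta>\<^sup>2" by simp
  then have "\<bar>e s0\<bar> < \<delta>" using e0 by (auto intro: power2_less_imp_less)
  with s0 show False by simp
qed

lemma flow_continuous_initial:
  fixes c cr :: "real \<times> real \<Rightarrow> real" and \<phi> :: "real \<Rightarrow> real \<Rightarrow> real"
  assumes U: "open U"
    and cder: "\<And>r s. (r, s) \<in> U \<Longrightarrow> ((\<lambda>r. c (r, s)) has_real_derivative cr (r, s)) (at r)"
    and cr: "continuous_on U cr"
    and dom: "\<And>r0 s. r0 \<in> A \<Longrightarrow> s \<in> {0..T} \<Longrightarrow> (\<phi> r0 s, s) \<in> U"
    and ode: "\<And>r0 s. r0 \<in> A \<Longrightarrow> s \<in> {0..T} \<Longrightarrow>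
       (\<phi> r0 has_real_derivative c (\<phi> r0 s, s)) (at s within {0..T})"
    and init: "\<And>r0. r0 \<in> A \<Longrightarrow> \<phi> r0 0 = r0"
    and r0: "r0 \<in> A" and \<epsilon>: "\<epsilon> > 0"
  shows "\<exists>\<delta>>0. \<forall>r1\<in>A. \<bar>r1 - r0\<bar> < \<delta> \<longrightarrow> (\<forall>s\<in>{0..T}. \<bar>\<phi> r1 s - \<phi> r0 s\<bar> < \<epsilon>)"
proof -
  have "continuous_on {0..T} (\<phi> r0)" using ode[OF r0] by (rule DERIV_continuous_on)
  then obtain \<delta>0 L where \<delta>0: "\<delta>0 > 0" and L: "L \<ge> 0" and lip:
    "\<And>s y1 y2. s \<in> {0..T} \<Longrightarrow> \<bar>y1 - \<phi> r0 s\<bar> \<le> \<delta>0 \<Longrightarrow> \<bar>y2 - \<phi> r0 s\<bar> \<le> \<delta>0 \<Longrightarrow>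
       \<bar>c (y2, s) - c (y1, s)\<bar> \<le> L * \<bar>y2 - y1\<bar>"
    using lipschitz_near_compact_graph[OF U cder cr] dom[OF r0] by metis
  define \<delta> where "\<delta> = min \<delta>0 \<epsilon> * exp (- (L * T))"
  show ?thesis
  proof (intro exI[of _ \<delta>] conjI ballI impI)
    show "\<delta> > 0" using \<delta>0 \<epsilon> by (simp add: \<delta>_def)
    fix r1 s assume r1: "r1 \<in> A" "\<bar>r1 - r0\<bar> < \<delta>" and s: "s \<in> {0..T}"
    have "\<bar>\<phi> r1 s - \<phi> r0 s\<bar> < min \<delta>0 \<epsilon>"
    proof (rule gronwall_stays_small[OF L _ _ _ s])
      show "((\<lambda>s. \<phi> r1 s - \<phi> r0 s) has_real_derivative c (\<phi> r1 s, s) - c (\<phi> r0 s, s))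
          (at s within {0..T})" if "s \<in> {0..T}" for s
        using ode[OF r1(1) that] ode[OF r0 that] by (rule DERIV_diff)
      show "\<bar>c (\<phi> r1 s, s) - c (\<phi> r0 s, s)\<bar> \<le> L * \<bar>\<phi> r1 s - \<phi> r0 s\<bar>"
        if "s \<in> {0..T}" "\<bar>\<phi> r1 s - \<phi> r0 s\<bar> \<le> min \<delta>0 \<epsilon>" for s
        using lip[of s "\<phi> r0 s" "\<phi> r1 s"] that \<delta>0 by simp
      have "\<bar>r1 - r0\<bar> * exp (L * T) < \<delta> * exp (L * T)" using r1(2) by simp
      also have "\<dots> = min \<delta>0 \<epsilon>" by (simp add: \<delta>_def mult.assoc exp_add[symmetric])
      finally show "\<bar>\<phi> r1 0 - \<phi> r0 0\<bar> * exp (L * T) < min \<delta>0 \<epsilon>"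
        using init[OF r1(1)] init[OF r0] by simp
    qed
    then show "\<bar>\<phi> r1 s - \<phi> r0 s\<bar> < \<epsilon>" by simp
  qed
qed

lemma continuous_on_Times_if_uniformly_continuous_initial:
  fixes \<phi> :: "real \<Rightarrow> real \<Rightarrow> real"
  assumes unif: "\<And>r0 \<epsilon>. r0 \<in> A \<Longrightarrow> \<epsilon> > 0 \<Longrightarrow>
      \<exists>\<delta>>0. \<forall>r1\<in>A. \<bar>r1 - r0\<bar> < \<delta> \<longrightarrow> (\<forall>s\<in>S. \<bar>\<phi> r1 s - \<phi> r0 s\<bar> < \<epsilon>)"
    and cont: "\<And>r0. r0 \<in> A \<Longrightarrow> continuous_on S (\<phi> r0)"
  shows "continuous_on (A \<times> S) (\<lambda>p. \<phi> (fst p) (snd p))"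
  unfolding continuous_on_iff
proof (intro ballI allI impI)
  fix p and \<epsilon> :: real assume p: "p \<in> A \<times> S" and \<epsilon>: "\<epsilon> > 0"
  obtain r0 s0 where p0: "p = (r0, s0)" "r0 \<in> A" "s0 \<in> S" using p by auto
  obtain d1 where d1: "d1 > 0" "\<forall>r1\<in>A. \<bar>r1 - r0\<bar> < d1 \<longrightarrow> (\<forall>s\<in>S. \<bar>\<phi> r1 s - \<phi> r0 s\<bar> < \<epsilon> / 2)"
    using unif[OF p0(2), of "\<epsilon> / 2"] \<epsilon> by auto
  obtain d2 where d2: "d2 > 0" "\<forall>s\<in>S. dist s s0 < d2 \<longrightarrow> dist (\<phi> r0 s) (\<phi> r0 s0) < \<epsilon> / 2"
    using cont[OF p0(2)] p0(3) \<epsilon> unfolding continuous_on_iff by (meson half_gt_zero)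
  show "\<exists>d>0. \<forall>q\<in>A \<times> S. dist q p < d \<longrightarrow> dist (\<phi> (fst q) (snd q)) (\<phi> (fst p) (snd p)) < \<epsilon>"
  proof (intro exI[of _ "min d1 d2"] conjI ballI impI)
    show "min d1 d2 > 0" using d1 d2 by simp
    fix q assume q: "q \<in> A \<times> S" "dist q p < min d1 d2"
    obtain r1 s1 where q1: "q = (r1, s1)" "r1 \<in> A" "s1 \<in> S" using q by auto
    have "dist r1 r0 < d1" "dist s1 s0 < d2"
      using q(2) dist_fst_le[of q p] dist_snd_le[of q p] by (auto simp: q1 p0)
    then have "\<bar>\<phi> r1 s1 - \<phi> r0 s1\<bar> < \<epsilon> / 2" "\<bar>\<phi> r0 s1 - \<phi> r0 s0\<bar> < \<epsilon> / 2"
      using d1(2) d2(2) q1 by (auto simp: dist_real_def)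
    then have "\<bar>\<phi> r1 s1 - \<phi> r0 s0\<bar> < \<epsilon>" by linarith
    then show "dist (\<phi> (fst q) (snd q)) (\<phi> (fst p) (snd p)) < \<epsilon>"
      by (simp add: q1 p0 dist_real_def)
  qed
qed

section \<open>The Riccati equation for the slopes\<close>

text \<open>The variables are the values at one point of \<open>u\<close>, the sound speed \<open>H\<close> and their partial
  derivatives (\<open>urt\<close>, \<open>Hrt\<close> the mixed ones). The hypotheses are the reduced Euler equations and
  their \<open>r\<close>-derivatives; the left-hand side is \<open>A\<^sub>t + (u + H) A\<^sub>r\<close>, expanded by the quotient
  rule.\<close>
lemma riccati_identity:
  fixes m r u H ur Hr ut Ht urr Hrr urt Hrt :: real
  assumes r: "r \<noteq> 0" and w: "u + H \<noteq> 0" and z: "u - H \<noteq> 0"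
    and mass: "Ht + u * Hr + H * ur + m * H * u / r = 0"
    and momentum: "ut + u * ur + H * Hr = 0"
    and mass_r: "Hrt + 2 * ur * Hr + u * Hrr + H * urr
      + m * (Hr * u + H * ur) / r - m * H * u / r\<^sup>2 = 0"
    and momentum_r: "urt + ur\<^sup>2 + u * urr + Hr\<^sup>2 + H * Hrr = 0"
  defines "Q \<equiv> H * u / (u + H)"
    and "Qr \<equiv> ((Hr * u + H * ur) * (u + H) - H * u * (ur + Hr)) / (u + H)\<^sup>2"
    and "Qt \<equiv> ((Ht * u + H * ut) * (u + H) - H * u * (ut + Ht)) / (u + H)\<^sup>2"
    and "A \<equiv> ur + Hr + m / r * (H * u / (u + H))"
    and "B \<equiv> ur - Hr - m / r * (H * u / (u - H))"
  shows "(urt + Hrt + m / r * Qt) + (u + H) * (urr + Hrr + m / r * Qr - m / r\<^sup>2 * Q)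
    = A * (- A + 2 * m * H * u / (r * (u + H)) - m * (u + H) / (2 * r))
      + m * (u - H)\<^sup>2 * B / (2 * r * (u + H))"
proof -
  have Ht: "Ht = - (u * Hr + H * ur + m * H * u / r)" using mass by linarith
  have ut: "ut = - (u * ur + H * Hr)" using momentum by linarith
  have Hrt: "Hrt = - (2 * ur * Hr + u * Hrr + H * urr + m * (Hr * u + H * ur) / r - m * H * u / r\<^sup>2)"
    using mass_r by linarith
  have urt: "urt = - (ur\<^sup>2 + u * urr + Hr\<^sup>2 + H * Hrr)" using momentum_r by linarith
  \<comment> \<open>in the variables \<open>u + H\<close> and \<open>u - H\<close> all denominators become atomic\<close>
  define w where "w = u + H"
  define z where "z = u - H"
  have u: "u = (w + z) / 2" and H: "H = (w - z) / 2" by (simp_all add: w_def z_def)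
  have "w \<noteq> 0" "z \<noteq> 0" using w z by (simp_all add: w_def z_def)
  then show ?thesis
    unfolding Ht ut Hrt urt Q_def Qr_def Qt_def A_def B_def unfolding u H
    using r by (simp add: field_simps power2_eq_square)
qed

section \<open>Radially symmetric Euler flow with \<open>\<gamma> = 3\<close>\<close>

locale radial_euler_gamma3 =
  fixes m :: nat and K \<gamma> a b T :: real
    and \<rho> u :: "real \<times> real \<Rightarrow> real"
    and \<xi> \<psi> :: "real \<Rightarrow> real \<Rightarrow> real"
    and U :: "(real \<times> real) set"
  assumes K: "K > 0"
    and gam: "\<gamma> = 3"
    and U_open: "open U"
    and U_pos: "U \<subseteq> {x. fst x > 0}"
    and smooth_rho: "smooth_on2 U \<rho>"
    and smooth_u: "smooth_on2 U u"
    and rho_pos: "\<forall>x\<in>U. \<rho> x > 0"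
    and mass: "\<forall>x\<in>U. pd_t (\<lambda>(r, t). r ^ m * \<rho> (r, t)) x
                       + pd_r (\<lambda>(r, t). r ^ m * \<rho> (r, t) * u (r, t)) x = 0"
    and momentum: "\<forall>x\<in>U. pd_t (\<lambda>(r, t). r ^ m * \<rho> (r, t) * u (r, t)) x
                       + pd_r (\<lambda>(r, t). r ^ m * \<rho> (r, t) * (u (r, t))\<^sup>2) x
                       + (fst x) ^ m * pd_r (\<lambda>y. K * (\<rho> y) powr \<gamma>) x = 0"
    and xi_dom: "\<forall>r0\<in>{a..b}. \<forall>t\<in>{0..T}. (\<xi> r0 t, t) \<in> U"
    and psi_dom: "\<forall>r0\<in>{a..b}. \<forall>t\<in>{0..T}. (\<psi> r0 t, t) \<in> U"
    and xi_ode: "\<forall>r0\<in>{a..b}. \<forall>t\<in>{0..T}.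
                   ((\<xi> r0) has_real_derivative c1 K \<gamma> \<rho> u (\<xi> r0 t, t)) (at t within {0..T})"
    and psi_ode: "\<forall>r0\<in>{a..b}. \<forall>t\<in>{0..T}.
                   ((\<psi> r0) has_real_derivative c2 K \<gamma> \<rho> u (\<psi> r0 t, t)) (at t within {0..T})"
    and xi_init: "\<forall>r0\<in>{a..b}. \<xi> r0 0 = r0"
    and psi_init: "\<forall>r0\<in>{a..b}. \<psi> r0 0 = r0"
    and supersonic: "\<forall>x\<in>dom_infl \<xi> \<psi> {a..b} T.
                       c1 K \<gamma> \<rho> u x < c2 K \<gamma> \<rho> u x \<and> c2 K \<gamma> \<rho> u x < 0"
begin

definition k :: real where "k = sqrt (K * \<gamma>)"

lemma k_sq: "k\<^sup>2 = 3 * K"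
  unfolding k_def using K gam by auto

lemma C2_rho: "Ck_on 2 U \<rho>" and C2_u: "Ck_on 2 U u"
  using smooth_rho smooth_u by (simp_all add: smooth_on2_def)

lemmas rho_partials = Ck_on_2_has_partials[OF C2_rho]
  and u_partials = Ck_on_2_has_partials[OF C2_u]

lemma fst_pos: "y \<in> U \<Longrightarrow> fst y > 0"
  using U_pos by auto

lemma rho_gt_0: "y \<in> U \<Longrightarrow> \<rho> y > 0"
  using rho_pos by blast

lemma hh_eq: "y \<in> U \<Longrightarrow> hh K \<gamma> \<rho> y = k * \<rho> y"
  unfolding hh_def k_def using rho_gt_0[of y] gam by simp

lemma c1_eq: "y \<in> U \<Longrightarrow> c1 K \<gamma> \<rho> u y = u y - k * \<rho> y"
  and c2_eq: "y \<in> U \<Longrightarrow> c2 K \<gamma> \<rho> u y = u y + k * \<rho> y"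
  by (simp_all add: c1_def c2_def hh_eq)

lemma mass_reduced:
  assumes y: "y \<in> U"
  shows "pd_t \<rho> y + u y * pd_r \<rho> y + \<rho> y * pd_r u y + real m * \<rho> y * u y / fst y = 0"
proof -
  define r where "r = fst y"
  have r: "r > 0" using fst_pos[OF y] by (simp add: r_def)
  have "0 = pd_t (\<lambda>y. fst y ^ m * \<rho> y) y + pd_r (\<lambda>y. fst y ^ m * \<rho> y * u y) y"
    using mass y by (simp add: case_prod_unfold)
  also have "\<dots> = r ^ m * (pd_t \<rho> y + u y * pd_r \<rho> y + \<rho> y * pd_r u y + real m * \<rho> y * u y / r)"
    unfolding has_partials_pd[OF has_partials_mult[OF
          has_partials_power[OF has_partials_fst] rho_partials(1)[OF y]]]
      has_partials_pd[OF has_partials_mult[OF has_partials_mult[OF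
          has_partials_power[OF has_partials_fst] rho_partials(1)[OF y]] u_partials(1)[OF y]]]
    using r by (cases m) (auto simp: r_def[symmetric] field_simps)
  finally show ?thesis using r by (simp add: r_def)
qed

lemma momentum_reduced:
  assumes y: "y \<in> U"
  shows "pd_t u y + u y * pd_r u y + k\<^sup>2 * \<rho> y * pd_r \<rho> y = 0"
proof -
  define r where "r = fst y"
  have r: "r > 0" using fst_pos[OF y] by (simp add: r_def)
  have "has_partials (\<lambda>y. K * \<rho> y powr \<gamma>) y
      (K * (real 3 * \<rho> y ^ (3 - 1) * pd_r \<rho> y)) (K * (real 3 * \<rho> y ^ (3 - 1) * pd_t \<rho> y))"
    by (rule has_partials_transform_open[OF
          has_partials_cmult[OF has_partials_power[OF rho_partials(1)[OF y]]] U_open y])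
      (simp add: gam less_imp_le[OF rho_gt_0])
  note pressure = has_partials_pd(1)[OF this]
  have "0 = pd_t (\<lambda>y. fst y ^ m * \<rho> y * u y) y + pd_r (\<lambda>y. fst y ^ m * \<rho> y * (u y)\<^sup>2) y
      + r ^ m * pd_r (\<lambda>y. K * \<rho> y powr \<gamma>) y"
    using momentum y by (simp add: case_prod_unfold r_def)
  also have "\<dots> = r ^ m * \<rho> y * (pd_t u y + u y * pd_r u y + k\<^sup>2 * \<rho> y * pd_r \<rho> y)
      + r ^ m * u y * (pd_t \<rho> y + u y * pd_r \<rho> y + \<rho> y * pd_r u y + real m * \<rho> y * u y / r)"
    unfolding pressure k_sq
      has_partials_pd[OF has_partials_mult[OF has_partials_mult[OF
          has_partials_power[OF has_partials_fst] rho_partials(1)[OF y]] u_partials(1)[OF y]]]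
      has_partials_pd[OF has_partials_mult[OF has_partials_mult[OF
          has_partials_power[OF has_partials_fst] rho_partials(1)[OF y]]
          has_partials_power[OF u_partials(1)[OF y]]]]
    using r by (cases m) (auto simp: r_def[symmetric] field_simps power2_eq_square)
  finally show ?thesis
    using mass_reduced[OF y] r rho_gt_0[OF y] by (simp add: r_def)
qed

lemma mass_reduced_pd_r:
  assumes y: "y \<in> U"
  shows "pd_t (pd_r \<rho>) y + 2 * pd_r u y * pd_r \<rho> y + u y * pd_r (pd_r \<rho>) y + \<rho> y * pd_r (pd_r u) y
    + real m * (pd_r \<rho> y * u y + \<rho> y * pd_r u y) / fst y - real m * \<rho> y * u y / (fst y)\<^sup>2 = 0"
proof -
  have "fst y \<noteq> 0" using fst_pos[OF y] by simp
  note partials = has_partials_add[OF has_partials_add[OF has_partials_add[OF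
      rho_partials(3)[OF y] has_partials_mult[OF u_partials(1)[OF y] rho_partials(2)[OF y]]]
      has_partials_mult[OF rho_partials(1)[OF y] u_partials(2)[OF y]]]
      has_partials_divide[OF has_partials_mult[OF has_partials_mult[OF
        has_partials_const[of "real m"] rho_partials(1)[OF y]] u_partials(1)[OF y]]
        has_partials_fst \<open>fst y \<noteq> 0\<close>]]
  from has_partials_zero_on_open(1)[OF partials U_open y mass_reduced] \<open>fst y \<noteq> 0\<close>
  show ?thesis
    by (simp add: pd_t_pd_r_commute[OF C2_rho U_open y] field_simps power2_eq_square)
qed

lemma momentum_reduced_pd_r:
  assumes y: "y \<in> U"
  shows "pd_t (pd_r u) y + (pd_r u y)\<^sup>2 + u y * pd_r (pd_r u) y
    + k\<^sup>2 * ((pd_r \<rho> y)\<^sup>2 + \<rho> y * pd_r (pd_r \<rho>) y) = 0"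
proof -
  note partials = has_partials_add[OF has_partials_add[OF
      u_partials(3)[OF y] has_partials_mult[OF u_partials(1)[OF y] u_partials(2)[OF y]]]
      has_partials_mult[OF has_partials_mult[OF has_partials_const[of "k\<^sup>2"] rho_partials(1)[OF y]]
        rho_partials(2)[OF y]]]
  from has_partials_zero_on_open(1)[OF partials U_open y momentum_reduced]
  show ?thesis
    by (simp add: pd_t_pd_r_commute[OF C2_u U_open y] field_simps power2_eq_square)
qed

text \<open>The two characteristic families differ only in the sign of the sound speed \<open>h = k \<rho>\<close>:
  \<open>\<alpha> = slope k\<close> and \<open>\<beta> = slope (-k)\<close>.\<close>
definition slope :: "real \<Rightarrow> real \<times> real \<Rightarrow> real" where
  "slope \<kappa> y = pd_r u y + \<kappa> * pd_r \<rho> y + real m / fst y * (\<kappa> * \<rho> y * u y / (u y + \<kappa> * \<rho> y))"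

definition riccati_coeff :: "real \<Rightarrow> real \<times> real \<Rightarrow> real" where
  "riccati_coeff \<kappa> y = - slope \<kappa> y + 2 * real m * (\<kappa> * \<rho> y) * u y / (fst y * (u y + \<kappa> * \<rho> y))
     - real m * (u y + \<kappa> * \<rho> y) / (2 * fst y)"

definition riccati_source :: "real \<Rightarrow> real \<times> real \<Rightarrow> real" where
  "riccati_source \<kappa> y = real m * (u y - \<kappa> * \<rho> y)\<^sup>2 * slope (- \<kappa>) y / (2 * fst y * (u y + \<kappa> * \<rho> y))"

lemma two_div_gamma_minus_1: "2 / (\<gamma> - 1) = 1"
  using gam by simp

lemma pd_r_hh: "y \<in> U \<Longrightarrow> pd_r (hh K \<gamma> \<rho>) y = k * pd_r \<rho> y"
  by (rule has_partials_pd(1)[OF has_partials_transform_open[OF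
        has_partials_cmult[OF rho_partials(1)] U_open]]) (auto simp: hh_eq)

lemma alpha_eq_slope: "y \<in> U \<Longrightarrow> alpha m K \<gamma> \<rho> u y = slope k y"
  and beta_eq_slope: "y \<in> U \<Longrightarrow> beta m K \<gamma> \<rho> u y = slope (- k) y"
  by (simp_all add: alpha_def beta_def slope_def pd_r_hh hh_eq c1_eq c2_eq two_div_gamma_minus_1)

lemma slope_has_partials:
  assumes x: "x \<in> U" and w: "u x + \<kappa> * \<rho> x \<noteq> 0"
  defines "r \<equiv> fst x" and "H \<equiv> \<kappa> * \<rho> x" and "Hr \<equiv> \<kappa> * pd_r \<rho> x" and "Ht \<equiv> \<kappa> * pd_t \<rho> x"
    and "Hrr \<equiv> \<kappa> * pd_r (pd_r \<rho>) x" and "Hrt \<equiv> \<kappa> * pd_t (pd_r \<rho>) x"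
  shows "has_partials (slope \<kappa>) x
      (pd_r (pd_r u) x + Hrr + real m / r * (((Hr * u x + H * pd_r u x) * (u x + H)
         - H * u x * (pd_r u x + Hr)) / (u x + H)\<^sup>2) - real m / r\<^sup>2 * (H * u x / (u x + H)))
      (pd_t (pd_r u) x + Hrt + real m / r * (((Ht * u x + H * pd_t u x) * (u x + H)
         - H * u x * (pd_t u x + Ht)) / (u x + H)\<^sup>2))"
proof -
  have r: "fst x \<noteq> 0" using fst_pos[OF x] by simp
  note partials = has_partials_add[OF has_partials_add[OF
      u_partials(2)[OF x] has_partials_cmult[where c = \<kappa>, OF rho_partials(2)[OF x]]]
      has_partials_mult[OF
        has_partials_divide[OF has_partials_const[of "real m"] has_partials_fst r]
        has_partials_divide[OF
          has_partials_mult[OF has_partials_cmult[where c = \<kappa>, OF rho_partials(1)[OF x]]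
            u_partials(1)[OF x]]
          has_partials_add[OF u_partials(1)[OF x]
            has_partials_cmult[where c = \<kappa>, OF rho_partials(1)[OF x]]] w]]]
  show ?thesis
    by (rule has_partials_cong[OF partials[folded slope_def[of \<kappa>, abs_def]]])
      (use r w in \<open>simp_all add: r_def H_def Hr_def Ht_def Hrr_def Hrt_def
        field_simps power2_eq_square\<close>)
qed

lemma slope_riccati:
  assumes x: "x \<in> U" and \<kappa>: "\<kappa>\<^sup>2 = k\<^sup>2"
    and w: "u x + \<kappa> * \<rho> x \<noteq> 0" and z: "u x - \<kappa> * \<rho> x \<noteq> 0"
  obtains Sr St where "has_partials (slope \<kappa>) x Sr St"
    "St + (u x + \<kappa> * \<rho> x) * Sr = slope \<kappa> x * riccati_coeff \<kappa> x + riccati_source \<kappa> x"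
proof -
  define r where "r = fst x"
  define H where "H = \<kappa> * \<rho> x"
  define Hr where "Hr = \<kappa> * pd_r \<rho> x"
  define Ht where "Ht = \<kappa> * pd_t \<rho> x"
  define Hrr where "Hrr = \<kappa> * pd_r (pd_r \<rho>) x"
  define Hrt where "Hrt = \<kappa> * pd_t (pd_r \<rho>) x"
  have r: "r \<noteq> 0" using fst_pos[OF x] by (simp add: r_def)
  have w': "u x + H \<noteq> 0" and z': "u x - H \<noteq> 0" using w z by (simp_all add: H_def)
  note slope_has_partials[OF x w, folded r_def H_def Hr_def Ht_def Hrr_def Hrt_def]
  moreover have "Ht + u x * Hr + H * pd_r u x + real m * H * u x / r = 0"
    using arg_cong[OF mass_reduced[OF x], of "\<lambda>v. \<kappa> * v"]
    by (simp add: r_def H_def Hr_def Ht_def algebra_simps)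
  moreover have "pd_t u x + u x * pd_r u x + H * Hr = 0"
    using momentum_reduced[OF x, folded \<kappa>]
    by (simp add: H_def Hr_def power2_eq_square algebra_simps)
  moreover have "Hrt + 2 * pd_r u x * Hr + u x * Hrr + H * pd_r (pd_r u) x
      + real m * (Hr * u x + H * pd_r u x) / r - real m * H * u x / r\<^sup>2 = 0"
    using arg_cong[OF mass_reduced_pd_r[OF x], of "\<lambda>v. \<kappa> * v"]
    by (simp add: r_def H_def Hr_def Hrr_def Hrt_def algebra_simps)
  moreover have "pd_t (pd_r u) x + (pd_r u x)\<^sup>2 + u x * pd_r (pd_r u) x + Hr\<^sup>2 + H * Hrr = 0"
    using momentum_reduced_pd_r[OF x, folded \<kappa>]
    by (simp add: H_def Hr_def Hrr_def power2_eq_square algebra_simps)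
  ultimately show ?thesis
    using riccati_identity[OF r w' z'] that
    by (simp add: slope_def riccati_coeff_def riccati_source_def H_def Hr_def r_def)
qed

abbreviation D where "D \<equiv> dom_infl \<xi> \<psi> {a..b} T"

lemma mem_D_iff:
  "(r, t) \<in> D \<longleftrightarrow> t \<in> {0..T} \<and> (\<exists>r1\<in>{a..b}. \<exists>r2\<in>{a..b}. \<psi> r1 t = r \<and> \<xi> r2 t = r)"
  by (simp add: dom_infl_def)

lemma D_subset_U: "D \<subseteq> U"
  using psi_dom by (auto simp: dom_infl_def)

lemma characteristic_speeds_neg:
  assumes x: "x \<in> D" and \<kappa>: "\<kappa> \<in> {k, - k}"
  shows "u x + \<kappa> * \<rho> x < 0"
proof -
  have "c1 K \<gamma> \<rho> u x < c2 K \<gamma> \<rho> u x" "c2 K \<gamma> \<rho> u x < 0" using supersonic x by auto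
  with \<kappa> D_subset_U x show ?thesis by (auto simp: c1_eq c2_eq)
qed

lemma c1_has_partials: "y \<in> U \<Longrightarrow>
    has_partials (c1 K \<gamma> \<rho> u) y (pd_r u y - k * pd_r \<rho> y) (pd_t u y - k * pd_t \<rho> y)"
  by (rule has_partials_transform_open[OF has_partials_diff[OF u_partials(1)
        has_partials_cmult[OF rho_partials(1)]] U_open]) (auto simp: c1_eq)

lemma c2_has_partials: "y \<in> U \<Longrightarrow>
    has_partials (c2 K \<gamma> \<rho> u) y (pd_r u y + k * pd_r \<rho> y) (pd_t u y + k * pd_t \<rho> y)"
  by (rule has_partials_transform_open[OF has_partials_add[OF u_partials(1)
        has_partials_cmult[OF rho_partials(1)]] U_open]) (auto simp: c2_eq)

lemmas u_continuous_on = Ck_on_2_continuous_on[OF C2_u]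
  and rho_continuous_on = Ck_on_2_continuous_on[OF C2_rho]

lemma psi_continuous_initial:
  "r0 \<in> {a..b} \<Longrightarrow> \<epsilon> > 0 \<Longrightarrow>
    \<exists>\<delta>>0. \<forall>r1\<in>{a..b}. \<bar>r1 - r0\<bar> < \<delta> \<longrightarrow> (\<forall>s\<in>{0..T}. \<bar>\<psi> r1 s - \<psi> r0 s\<bar> < \<epsilon>)"
  by (rule flow_continuous_initial[OF U_open, where cr = "\<lambda>y. pd_r u y + k * pd_r \<rho> y"])
    (use psi_dom psi_ode psi_init in \<open>auto intro!: continuous_intros u_continuous_on
      rho_continuous_on has_partials_horizontal[OF c2_has_partials]\<close>)

lemma xi_continuous_initial:
  "r0 \<in> {a..b} \<Longrightarrow> \<epsilon> > 0 \<Longrightarrow>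
    \<exists>\<delta>>0. \<forall>r1\<in>{a..b}. \<bar>r1 - r0\<bar> < \<delta> \<longrightarrow> (\<forall>s\<in>{0..T}. \<bar>\<xi> r1 s - \<xi> r0 s\<bar> < \<epsilon>)"
  by (rule flow_continuous_initial[OF U_open, where cr = "\<lambda>y. pd_r u y - k * pd_r \<rho> y"])
    (use xi_dom xi_ode xi_init in \<open>auto intro!: continuous_intros u_continuous_on
      rho_continuous_on has_partials_horizontal[OF c1_has_partials]\<close>)

lemma psi_continuous_on: "r0 \<in> {a..b} \<Longrightarrow> continuous_on {0..T} (\<psi> r0)"
  by (rule DERIV_continuous_on[of _ _ "\<lambda>s. c2 K \<gamma> \<rho> u (\<psi> r0 s, s)"]) (use psi_ode in auto)

lemma xi_continuous_on: "r0 \<in> {a..b} \<Longrightarrow> continuous_on {0..T} (\<xi> r0)"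
  by (rule DERIV_continuous_on[of _ _ "\<lambda>s. c1 K \<gamma> \<rho> u (\<xi> r0 s, s)"]) (use xi_ode in auto)

lemma psi_continuous_on_Times: "continuous_on ({a..b} \<times> {0..T}) (\<lambda>p. \<psi> (fst p) (snd p))"
  and xi_continuous_on_Times: "continuous_on ({a..b} \<times> {0..T}) (\<lambda>p. \<xi> (fst p) (snd p))"
  by (rule continuous_on_Times_if_uniformly_continuous_initial;
      simp add: psi_continuous_initial xi_continuous_initial psi_continuous_on xi_continuous_on)+

lemma psi_continuous_on_initial: "s \<in> {0..T} \<Longrightarrow> continuous_on {a..b} (\<lambda>r. \<psi> r s)"
  by (rule continuous_on_compose2[OF psi_continuous_on_Times, of _ "\<lambda>r. (r, s)", simplified])
    (auto intro!: continuous_intros)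

lemma xi_continuous_on_initial: "s \<in> {0..T} \<Longrightarrow> continuous_on {a..b} (\<lambda>r. \<xi> r s)"
  by (rule continuous_on_compose2[OF xi_continuous_on_Times, of _ "\<lambda>r. (r, s)", simplified])
    (auto intro!: continuous_intros)

lemma compact_D: "compact D"
proof -
  define B where "B = {a..b} \<times> {a..b} \<times> {0..T}"
  have "continuous_on B (\<lambda>p. (\<lambda>q. \<psi> (fst q) (snd q)) (fst p, snd (snd p)))"
    by (rule continuous_on_compose2[OF psi_continuous_on_Times])
      (auto simp: B_def intro!: continuous_intros)
  then have psi: "continuous_on B (\<lambda>p. \<psi> (fst p) (snd (snd p)))" by simp
  have "continuous_on B (\<lambda>p. (\<lambda>q. \<xi> (fst q) (snd q)) (fst (snd p), snd (snd p)))"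
    by (rule continuous_on_compose2[OF xi_continuous_on_Times])
      (auto simp: B_def intro!: continuous_intros)
  then have xi: "continuous_on B (\<lambda>p. \<xi> (fst (snd p)) (snd (snd p)))" by simp
  define Q where "Q = {p \<in> B. \<psi> (fst p) (snd (snd p)) - \<xi> (fst (snd p)) (snd (snd p)) = 0}"
  have "compact B" by (simp add: B_def compact_Times)
  moreover have "closed Q" unfolding Q_def
    by (rule continuous_closed_preimage_constant[OF continuous_on_diff[OF psi xi]
          compact_imp_closed]) (simp add: \<open>compact B\<close>)
  ultimately have "compact Q" using compact_Int_closed[of B Q] by (simp add: Q_def Int_absorb1)
  moreover have "D = (\<lambda>p. (\<psi> (fst p) (snd (snd p)), snd (snd p))) ` Q"
  proof (intro set_eqI iffI)
    fix x assume "x \<in> D"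
    moreover obtain r t where x: "x = (r, t)" by (cases x)
    ultimately obtain r1 r2 where "t \<in> {0..T}" "r1 \<in> {a..b}" "r2 \<in> {a..b}"
      "\<psi> r1 t = r" "\<xi> r2 t = r"
      by (auto simp: mem_D_iff)
    with x show "x \<in> (\<lambda>p. (\<psi> (fst p) (snd (snd p)), snd (snd p))) ` Q"
      by (intro image_eqI[of _ _ "(r1, r2, t)"]) (auto simp: Q_def B_def)
  qed (auto simp: Q_def B_def dom_infl_def)
  moreover have "continuous_on Q (\<lambda>p. (\<psi> (fst p) (snd (snd p)), snd (snd p)))"
    by (intro continuous_intros continuous_on_subset[OF psi]) (auto simp: Q_def)
  ultimately show ?thesis by (metis compact_continuous_image)
qed

lemma characteristics_separate:
  assumes r: "r1 \<in> {a..b}" "r2 \<in> {a..b}" and s: "0 \<le> s1" "s1 < s2" "s2 \<le> T"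
    and le: "\<xi> r2 s1 \<le> \<psi> r1 s1"
  shows "\<xi> r2 s2 < \<psi> r1 s2"
proof -
  have "0 < \<psi> r1 s2 - \<xi> r2 s2"
  proof (rule pos_if_deriv_pos_at_zeros[where d = "\<lambda>s. \<psi> r1 s - \<xi> r2 s"])
    show "((\<lambda>s. \<psi> r1 s - \<xi> r2 s) has_real_derivative
        c2 K \<gamma> \<rho> u (\<psi> r1 s, s) - c1 K \<gamma> \<rho> u (\<xi> r2 s, s)) (at s within {0..T})"
      if "s \<in> {0..T}" for s
      using psi_ode xi_ode r that by (intro DERIV_diff) auto
    show "0 < c2 K \<gamma> \<rho> u (\<psi> r1 s, s) - c1 K \<gamma> \<rho> u (\<xi> r2 s, s)"
      if "s \<in> {0..T}" "\<psi> r1 s - \<xi> r2 s = 0" for s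
    proof -
      have "(\<psi> r1 s, s) \<in> D" using that r by (auto simp: mem_D_iff)
      with supersonic that show ?thesis by auto
    qed
  qed (use s le in auto)
  then show ?thesis by simp
qed

text \<open>At each earlier time the two characteristics through a point of \<open>D\<close> lie between the
  extreme characteristics from \<open>a\<close> and \<open>b\<close>, so by the intermediate value theorem each of them
  meets a characteristic of the other family.\<close>
lemma characteristics_stay_ordered:
  assumes r: "r1 \<in> {a..b}" "r2 \<in> {a..b}" and s: "0 \<le> s1" "s1 \<le> s2" "s2 \<le> T"
    and le: "\<xi> r2 s1 \<le> \<psi> r1 s1"
  shows "\<xi> r2 s2 \<le> \<psi> r1 s2"
  using characteristics_separate[OF r, of s1 s2] assms by (cases "s1 = s2") auto

lemma characteristics_in_D:
  assumes r: "r1 \<in> {a..b}" "r2 \<in> {a..b}" and t: "t \<in> {0..T}" and eq: "\<psi> r1 t = \<xi> r2 t"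
    and s: "s \<in> {0..t}"
  shows "(\<psi> r1 s, s) \<in> D" "(\<xi> r2 s, s) \<in> D"
proof -
  have sT: "s \<in> {0..T}" using s t by auto
  have order: "\<psi> r1 s \<le> \<xi> r2 s"
  proof (rule ccontr)
    assume "\<not> ?thesis"
    moreover have "s < t" using s eq calculation by (cases "s = t") auto
    ultimately have "\<xi> r2 t < \<psi> r1 t" using characteristics_separate[OF r, of s t] s t by auto
    with eq show False by simp
  qed
  have ab: "a \<in> {a..b}" "b \<in> {a..b}" using r by auto
  have left: "\<xi> a s \<le> \<psi> r1 s"
    using characteristics_stay_ordered[OF r(1) ab(1), of 0 s] xi_init psi_init r ab sT by auto
  have right: "\<xi> r2 s \<le> \<psi> b s"
    using characteristics_stay_ordered[OF ab(2) r(2), of 0 s] xi_init psi_init r ab sT by auto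
  obtain r2' where "a \<le> r2'" "r2' \<le> r2" "\<xi> r2' s = \<psi> r1 s"
    using IVT'[of "\<lambda>r. \<xi> r s" a "\<psi> r1 s" r2] left order r
      continuous_on_subset[OF xi_continuous_on_initial[OF sT], of "{a..r2}"] by auto
  then show "(\<psi> r1 s, s) \<in> D" using r sT by (auto simp: mem_D_iff)
  obtain r1' where "r1 \<le> r1'" "r1' \<le> b" "\<psi> r1' s = \<xi> r2 s"
    using IVT'[of "\<lambda>r. \<psi> r s" r1 "\<xi> r2 s" b] right order r
      continuous_on_subset[OF psi_continuous_on_initial[OF sT], of "{r1..b}"] by auto
  then show "(\<xi> r2 s, s) \<in> D" using r sT by (auto simp: mem_D_iff)
qed

lemma continuous_on_slope:
  assumes \<kappa>: "\<kappa> \<in> {k, - k}"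
  shows "continuous_on D (slope \<kappa>)" "continuous_on D (riccati_coeff \<kappa>)"
proof -
  have nz: "fst x \<noteq> 0" "u x + \<kappa> * \<rho> x \<noteq> 0" if "x \<in> D" for x
    using fst_pos[of x] characteristic_speeds_neg[OF that \<kappa>] that D_subset_U by auto
  have cont: "continuous_on D u" "continuous_on D \<rho>"
    "continuous_on D (pd_r u)" "continuous_on D (pd_r \<rho>)"
    using u_continuous_on rho_continuous_on by (auto intro: continuous_on_subset[OF _ D_subset_U])
  show "continuous_on D (slope \<kappa>)"
    unfolding slope_def[abs_def] by (intro continuous_intros cont) (use nz in auto)
  then show "continuous_on D (riccati_coeff \<kappa>)"
    unfolding riccati_coeff_def[abs_def] by (intro continuous_intros cont) (use nz in auto)
qed

lemma slope_along_characteristic: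
  assumes \<kappa>: "\<kappa> \<in> {k, - k}" and x: "(\<phi> s, s) \<in> D"
    and \<phi>: "(\<phi> has_real_derivative u (\<phi> s, s) + \<kappa> * \<rho> (\<phi> s, s)) (at s within S)"
  shows "((\<lambda>s. slope \<kappa> (\<phi> s, s)) has_real_derivative
      slope \<kappa> (\<phi> s, s) * riccati_coeff \<kappa> (\<phi> s, s) + riccati_source \<kappa> (\<phi> s, s)) (at s within S)"
proof -
  have "- \<kappa> \<in> {k, - k}" using \<kappa> by auto
  from characteristic_speeds_neg[OF x \<kappa>] characteristic_speeds_neg[OF x this]
  have "u (\<phi> s, s) + \<kappa> * \<rho> (\<phi> s, s) \<noteq> 0" "u (\<phi> s, s) - \<kappa> * \<rho> (\<phi> s, s) \<noteq> 0"
    by auto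
  moreover have "\<kappa>\<^sup>2 = k\<^sup>2" using \<kappa> by auto
  ultimately obtain Sr St where partials: "has_partials (slope \<kappa>) (\<phi> s, s) Sr St"
    and riccati: "St + (u (\<phi> s, s) + \<kappa> * \<rho> (\<phi> s, s)) * Sr
       = slope \<kappa> (\<phi> s, s) * riccati_coeff \<kappa> (\<phi> s, s) + riccati_source \<kappa> (\<phi> s, s)"
    using slope_riccati D_subset_U x by blast
  from has_partials_along_graph[OF \<phi> partials] riccati show ?thesis by (simp add: algebra_simps)
qed

text \<open>The source term of the Riccati equation for \<open>slope \<kappa>\<close> has the sign of \<open>- slope (- \<kappa>)\<close>,
  because both characteristic speeds are negative.\<close>
lemma slope_sign_persists:
  assumes \<kappa>: "\<kappa> \<in> {k, - k}" and t: "0 \<le> t"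
    and curve: "\<And>s. s \<in> {0..t} \<Longrightarrow> (\<phi> s, s) \<in> D"
    and \<phi>: "\<And>s. s \<in> {0..t} \<Longrightarrow>
      (\<phi> has_real_derivative u (\<phi> s, s) + \<kappa> * \<rho> (\<phi> s, s)) (at s within {0..t})"
    and other: "\<And>s. 0 \<le> s \<Longrightarrow> s < t \<Longrightarrow> \<tau> * slope (- \<kappa>) (\<phi> s, s) < 0"
    and init: "\<tau> * slope \<kappa> (\<phi> 0, 0) > 0"
  shows "\<tau> * slope \<kappa> (\<phi> t, t) > 0"
proof (rule pos_if_deriv_ge_linear[OF t, where p = "\<lambda>s. riccati_coeff \<kappa> (\<phi> s, s)"])
  show "((\<lambda>s. \<tau> * slope \<kappa> (\<phi> s, s)) has_real_derivative
      \<tau> * (slope \<kappa> (\<phi> s, s) * riccati_coeff \<kappa> (\<phi> s, s) + riccati_source \<kappa> (\<phi> s, s)))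
      (at s within {0..t})" if "s \<in> {0..t}" for s
    by (intro DERIV_cmult slope_along_characteristic[OF \<kappa> curve[OF that] \<phi>[OF that]])
  have "continuous_on {0..t} (\<lambda>s. (\<phi> s, s))"
    using \<phi> by (intro continuous_on_Pair continuous_on_id DERIV_continuous_on) auto
  then show "continuous_on {0..t} (\<lambda>s. riccati_coeff \<kappa> (\<phi> s, s))"
    by (rule continuous_on_compose2[OF continuous_on_slope(2)[OF \<kappa>]]) (use curve in auto)
  show "riccati_coeff \<kappa> (\<phi> s, s) * (\<tau> * slope \<kappa> (\<phi> s, s))
      \<le> \<tau> * (slope \<kappa> (\<phi> s, s) * riccati_coeff \<kappa> (\<phi> s, s) + riccati_source \<kappa> (\<phi> s, s))"
    if s: "0 \<le> s" "s < t" for s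
  proof -
    define x where "x = (\<phi> s, s)"
    have x: "x \<in> D" using curve s by (simp add: x_def)
    then have "x \<in> U" using D_subset_U by blast
    then have den: "2 * fst x * (u x + \<kappa> * \<rho> x) < 0"
      using fst_pos characteristic_speeds_neg[OF x \<kappa>] by (intro mult_pos_neg) auto
    have num: "real m * (u x - \<kappa> * \<rho> x)\<^sup>2 * (\<tau> * slope (- \<kappa>) x) \<le> 0"
      using other[OF s] by (intro mult_nonneg_nonpos[of "_ * _"]) (auto simp: x_def)
    have "0 \<le> real m * (u x - \<kappa> * \<rho> x)\<^sup>2 * (\<tau> * slope (- \<kappa>) x)
        / (2 * fst x * (u x + \<kappa> * \<rho> x))"
      using divide_nonpos_neg[OF num den] .
    also have "\<dots> = \<tau> * riccati_source \<kappa> x"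
      by (simp add: riccati_source_def mult_ac)
    finally have "0 \<le> \<tau> * riccati_source \<kappa> x" .
    then show ?thesis by (simp add: x_def algebra_simps)
  qed
qed (use init in auto)

lemma psi_has_real_derivative:
  "r0 \<in> {a..b} \<Longrightarrow> s \<in> {0..T} \<Longrightarrow>
    (\<psi> r0 has_real_derivative u (\<psi> r0 s, s) + k * \<rho> (\<psi> r0 s, s)) (at s within {0..T})"
proof -
  assume "r0 \<in> {a..b}" "s \<in> {0..T}"
  with psi_dom have "(\<psi> r0 s, s) \<in> U" by blast
  with psi_ode[rule_format, OF \<open>r0 \<in> {a..b}\<close> \<open>s \<in> {0..T}\<close>] show ?thesis
    by (simp add: c2_eq)
qed

lemma xi_has_real_derivative:
  "r0 \<in> {a..b} \<Longrightarrow> s \<in> {0..T} \<Longrightarrow>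
    (\<xi> r0 has_real_derivative u (\<xi> r0 s, s) + - k * \<rho> (\<xi> r0 s, s)) (at s within {0..T})"
proof -
  assume "r0 \<in> {a..b}" "s \<in> {0..T}"
  with xi_dom have "(\<xi> r0 s, s) \<in> U" by blast
  with xi_ode[rule_format, OF \<open>r0 \<in> {a..b}\<close> \<open>s \<in> {0..T}\<close>] show ?thesis
    by (simp add: c1_eq)
qed

definition slope_signs :: "real \<Rightarrow> real \<times> real \<Rightarrow> bool" where
  "slope_signs \<tau> y \<longleftrightarrow> \<tau> * slope k y > 0 \<and> \<tau> * slope (- k) y < 0"

lemma earliest_sign_failure:
  assumes "x \<in> D" "\<not> slope_signs \<tau> x"
  obtains x0 where "x0 \<in> D" "\<not> slope_signs \<tau> x0"
    "\<And>y. y \<in> D \<Longrightarrow> snd y < snd x0 \<Longrightarrow> slope_signs \<tau> y"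
proof -
  define F where "F = {y \<in> D. \<tau> * slope k y \<le> 0} \<union> {y \<in> D. 0 \<le> \<tau> * slope (- k) y}"
  have F_iff: "y \<in> F \<longleftrightarrow> y \<in> D \<and> \<not> slope_signs \<tau> y" for y
    by (auto simp: F_def slope_signs_def)
  have cont: "continuous_on D (\<lambda>y. \<tau> * slope k y)" "continuous_on D (\<lambda>y. \<tau> * slope (- k) y)"
    using continuous_on_slope(1)[of k] continuous_on_slope(1)[of "- k"]
    by (auto intro: continuous_on_mult_left)
  have "closed D" using compact_D by (rule compact_imp_closed)
  have "closed F" unfolding F_def
    using continuous_on_closed_Collect_le[OF cont(1) continuous_on_const \<open>closed D\<close>]
      continuous_on_closed_Collect_le[OF continuous_on_const cont(2) \<open>closed D\<close>]
    by (rule closed_Un)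
  moreover have "D \<inter> F = F" by (auto simp: F_def)
  ultimately have "compact F" using compact_Int_closed[OF compact_D, of F] by simp
  moreover have "F \<noteq> {}" using assms by (auto simp: F_iff)
  ultimately have "\<exists>x0\<in>F. \<forall>y\<in>F. snd x0 \<le> snd y"
    using continuous_on_snd[OF continuous_on_id] by (rule continuous_attains_inf)
  then obtain x0 where "x0 \<in> F" and first: "\<And>y. y \<in> F \<Longrightarrow> snd x0 \<le> snd y" by blast
  show ?thesis
  proof (rule that)
    show "x0 \<in> D" "\<not> slope_signs \<tau> x0" using \<open>x0 \<in> F\<close> by (simp_all add: F_iff)
    show "slope_signs \<tau> y" if "y \<in> D" "snd y < snd x0" for y
    proof (rule ccontr)
      assume "\<not> slope_signs \<tau> y"
      with \<open>y \<in> D\<close> have "snd x0 \<le> snd y" by (intro first) (simp add: F_iff)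
      with \<open>snd y < snd x0\<close> show False by simp
    qed
  qed
qed

lemma slopes_keep_sign:
  assumes init: "\<And>r. (r, 0) \<in> D \<Longrightarrow> slope_signs \<tau> (r, 0)" and x: "x \<in> D"
  shows "slope_signs \<tau> x"
proof (rule ccontr)
  assume "\<not> slope_signs \<tau> x"
  then obtain x0 where "x0 \<in> D" "\<not> slope_signs \<tau> x0"
    and earlier: "\<And>y. y \<in> D \<Longrightarrow> snd y < snd x0 \<Longrightarrow> slope_signs \<tau> y"
    using earliest_sign_failure[OF x] by blast
  obtain r t where x0: "x0 = (r, t)" by (cases x0)
  with \<open>x0 \<in> D\<close> obtain r1 r2 where t: "t \<in> {0..T}" and r12: "r1 \<in> {a..b}" "r2 \<in> {a..b}"
    and meet: "\<psi> r1 t = r" "\<xi> r2 t = r"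
    by (auto simp: mem_D_iff)
  have on_D: "(\<psi> r1 s, s) \<in> D" "(\<xi> r2 s, s) \<in> D" if "s \<in> {0..t}" for s
    using characteristics_in_D[OF r12 t _ that] meet by auto
  have sub: "{0..t} \<subseteq> {0..T}" using t by auto
  have "\<tau> * slope k (\<psi> r1 t, t) > 0"
  proof (rule slope_sign_persists[where \<kappa> = k])
    show "(\<psi> r1 has_real_derivative u (\<psi> r1 s, s) + k * \<rho> (\<psi> r1 s, s)) (at s within {0..t})"
      if "s \<in> {0..t}" for s
      using DERIV_subset[OF psi_has_real_derivative[OF r12(1)] sub] that sub by blast
    show "\<tau> * slope (- k) (\<psi> r1 s, s) < 0" if "0 \<le> s" "s < t" for s
      using earlier[OF on_D(1)] that by (simp add: slope_signs_def x0)
    show "\<tau> * slope k (\<psi> r1 0, 0) > 0"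
      using init[OF on_D(1)[of 0]] t by (simp add: slope_signs_def)
  qed (use on_D t in auto)
  moreover have "- \<tau> * slope (- k) (\<xi> r2 t, t) > 0"
  proof (rule slope_sign_persists[where \<kappa> = "- k"])
    show "(\<xi> r2 has_real_derivative u (\<xi> r2 s, s) + - k * \<rho> (\<xi> r2 s, s)) (at s within {0..t})"
      if "s \<in> {0..t}" for s
      using DERIV_subset[OF xi_has_real_derivative[OF r12(2)] sub] that sub by blast
    show "- \<tau> * slope (- (- k)) (\<xi> r2 s, s) < 0" if "0 \<le> s" "s < t" for s
      using earlier[OF on_D(2)] that by (simp add: slope_signs_def x0)
    show "- \<tau> * slope (- k) (\<xi> r2 0, 0) > 0"
      using init[OF on_D(2)[of 0]] t by (simp add: slope_signs_def)
  qed (use on_D t in auto)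
  ultimately have "slope_signs \<tau> x0" using meet by (simp add: slope_signs_def x0)
  with \<open>\<not> slope_signs \<tau> x0\<close> show False ..
qed

lemma alpha_beta_keep_sign:
  assumes init: "\<forall>r\<in>{a..b}. \<tau> * alpha m K \<gamma> \<rho> u (r, 0) > 0 \<and> \<tau> * beta m K \<gamma> \<rho> u (r, 0) < 0"
  shows "\<forall>x\<in>D. \<tau> * alpha m K \<gamma> \<rho> u x > 0 \<and> \<tau> * beta m K \<gamma> \<rho> u x < 0"
proof
  fix x assume x: "x \<in> D"
  have "slope_signs \<tau> (r, 0)" if r: "(r, 0) \<in> D" for r
  proof -
    have "r \<in> {a..b}" using r psi_init by (auto simp: mem_D_iff)
    moreover have "(r, 0) \<in> U" using r D_subset_U by blast
    ultimately show ?thesis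
      using init[rule_format, of r] by (simp add: slope_signs_def alpha_eq_slope beta_eq_slope)
  qed
  then have "slope_signs \<tau> x" using x by (rule slopes_keep_sign)
  moreover have "x \<in> U" using x D_subset_U by blast
  ultimately show "\<tau> * alpha m K \<gamma> \<rho> u x > 0 \<and> \<tau> * beta m K \<gamma> \<rho> u x < 0"
    by (simp add: slope_signs_def alpha_eq_slope beta_eq_slope)
qed

end

theorem mainTheorem6:
  fixes m :: nat and K \<gamma> a b T :: real
    and \<rho> u :: "real \<times> real \<Rightarrow> real"
    and \<xi> \<psi> :: "real \<Rightarrow> real \<Rightarrow> real"
    and U :: "(real \<times> real) set"
  assumes m: "m \<in> {1, 2}"
    and K: "K > 0"
    and gam: "\<gamma> = 3"
    and ab: "0 < a" "a \<le> b"
    and T: "T > 0"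
    and U_open: "open U"
    and U_pos: "U \<subseteq> {x. fst x > 0}"
    and smooth_rho: "smooth_on2 U \<rho>"
    and smooth_u: "smooth_on2 U u"
    and rho_pos: "\<forall>x\<in>U. \<rho> x > 0"
    and mass: "\<forall>x\<in>U. pd_t (\<lambda>(r, t). r ^ m * \<rho> (r, t)) x
                       + pd_r (\<lambda>(r, t). r ^ m * \<rho> (r, t) * u (r, t)) x = 0"
    and momentum: "\<forall>x\<in>U. pd_t (\<lambda>(r, t). r ^ m * \<rho> (r, t) * u (r, t)) x
                       + pd_r (\<lambda>(r, t). r ^ m * \<rho> (r, t) * (u (r, t))\<^sup>2) x
                       + (fst x) ^ m * pd_r (\<lambda>y. K * (\<rho> y) powr \<gamma>) x = 0"
    and xi_dom: "\<forall>r0\<in>{a..b}. \<forall>t\<in>{0..T}. (\<xi> r0 t, t) \<in> U"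
    and psi_dom: "\<forall>r0\<in>{a..b}. \<forall>t\<in>{0..T}. (\<psi> r0 t, t) \<in> U"
    and xi_ode: "\<forall>r0\<in>{a..b}. \<forall>t\<in>{0..T}.
                   ((\<xi> r0) has_real_derivative c1 K \<gamma> \<rho> u (\<xi> r0 t, t)) (at t within {0..T})"
    and psi_ode: "\<forall>r0\<in>{a..b}. \<forall>t\<in>{0..T}.
                   ((\<psi> r0) has_real_derivative c2 K \<gamma> \<rho> u (\<psi> r0 t, t)) (at t within {0..T})"
    and xi_init: "\<forall>r0\<in>{a..b}. \<xi> r0 0 = r0"
    and psi_init: "\<forall>r0\<in>{a..b}. \<psi> r0 0 = r0"
    and supersonic: "\<forall>x\<in>dom_infl \<xi> \<psi> {a..b} T.
                       c1 K \<gamma> \<rho> u x < c2 K \<gamma> \<rho> u x \<and> c2 K \<gamma> \<rho> u x < 0"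
  shows "((\<forall>r\<in>{a..b}. alpha m K \<gamma> \<rho> u (r, 0) > 0 \<and> beta m K \<gamma> \<rho> u (r, 0) < 0)
            \<longrightarrow> (\<forall>x\<in>dom_infl \<xi> \<psi> {a..b} T. alpha m K \<gamma> \<rho> u x > 0 \<and> beta m K \<gamma> \<rho> u x < 0))
       \<and> ((\<forall>r\<in>{a..b}. alpha m K \<gamma> \<rho> u (r, 0) < 0 \<and> beta m K \<gamma> \<rho> u (r, 0) > 0)
            \<longrightarrow> (\<forall>x\<in>dom_infl \<xi> \<psi> {a..b} T. alpha m K \<gamma> \<rho> u x < 0 \<and> beta m K \<gamma> \<rho> u x > 0))"
proof -
  interpret radial_euler_gamma3 m K \<gamma> a b T \<rho> u \<xi> \<psi> U
    by unfold_locales (fact K gam U_open U_pos smooth_rho smooth_u rho_pos mass momentum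
        xi_dom psi_dom xi_ode psi_ode xi_init psi_init supersonic)+
  show ?thesis
  proof (intro conjI impI)
    assume "\<forall>r\<in>{a..b}. alpha m K \<gamma> \<rho> u (r, 0) > 0 \<and> beta m K \<gamma> \<rho> u (r, 0) < 0"
    then show "\<forall>x\<in>D. alpha m K \<gamma> \<rho> u x > 0 \<and> beta m K \<gamma> \<rho> u x < 0"
      using alpha_beta_keep_sign[of 1] by simp
  next
    assume "\<forall>r\<in>{a..b}. alpha m K \<gamma> \<rho> u (r, 0) < 0 \<and> beta m K \<gamma> \<rho> u (r, 0) > 0"
    then show "\<forall>x\<in>D. alpha m K \<gamma> \<rho> u x < 0 \<and> beta m K \<gamma> \<rho> u x > 0"
      using alpha_beta_keep_sign[of "- 1"] by simp
  qed
qed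

end
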